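(* Let $s_0,s_1,s_2$ be the $3$-hyperbolic functions and let $\ell_\nu^-=\{t\zeta_\nu: t\le 0\}$ for $\nu=0,1,2$. Then none of $s_0,s_1,s_2$ vanishes on $\Omega=\mathbb{C}\setminus\bigcup_{\nu=0}^{2}\ell_\nu^-$; that is, every zero of each $s_k$ lies on one of the three rays $\ell_0^-,\ell_1^-,\ell_2^-$ (which are the bisectors of the three sectors into which the rays $\{t\zeta_\nu: t>0\}$ divide the plane).
   Context: Let $\zeta_m=e^{2\pi i m/3}$, $m=0,1,2$. The $3$-hyperbolic functions are $s_k(z)=\frac13\sum_{m=0}^{2}\zeta_m^{-k}e^{z\zeta_m}$, $k=0,1,2$, $z\in\mathbb{C}$. *)

theory Defs
  imports "HOL-Analysis.Analysis"
begin

definition zeta3 :: "nat \<Rightarrow> complex" where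
  "zeta3 m = exp (2 * pi * \<i> * of_nat m / 3)"

definition hyp3 :: "nat \<Rightarrow> complex \<Rightarrow> complex" where
  "hyp3 k z = (1/3) * (\<Sum>m<3. inverse (zeta3 m) ^ k * exp (z * zeta3 m))"

definition neg_ray :: "nat \<Rightarrow> complex set" where
  "neg_ray \<nu> = {complex_of_real t * zeta3 \<nu> | t. t \<le> 0}"

end

theory Submission
  imports Defs
begin

text \<open>
  Multiplying \<open>z\<close> by a cube root of unity \<open>\<omega>\<close> multiplies \<open>s_k(z)\<close> by \<open>\<omega>^k\<close> and permutes the rays,
  so it suffices to consider \<open>z\<close> with \<open>Im z \<noteq> 0\<close> and \<open>\<surd>3 Re z + |Im z| \<le> 0\<close>. The three summands
  \<open>a\<close>, \<open>b\<close>, \<open>c = e^z\<close> of \<open>3 s_k(z)\<close> have product \<open>1\<close>; if their sum vanished, then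
  \<open>e^{3z} = c^3 = a/b + b/a + 2 = 2 cosh w + 2\<close> with \<open>e^w = a/b\<close> and \<open>Re w = \<surd>3 Im z\<close>.
  As \<open>Im w\<close> varies, \<open>2 cosh w\<close> runs over the ellipse with semi-axes \<open>2 cosh (Re w)\<close> and
  \<open>2 |sinh (Re w)|\<close>, whereas \<open>e^{3z} - 2 = R e^{i \<surd>3 Re w} - 2\<close> with \<open>0 \<le> R \<le> e^{-|Re w|}\<close> lies
  strictly inside it; this is an elementary estimate based on \<open>e^P \<ge> 1 + P + P^2/2\<close>,
  \<open>sinh P \<ge> P\<close> and \<open>cos x \<ge> 1 - x^2/2\<close>.
\<close>

lemma zeta3_eq_power: "zeta3 m = zeta3 1 ^ m"
  unfolding zeta3_def by (simp flip: exp_of_nat_mult add: algebra_simps)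

lemma zeta3_1_eq: "zeta3 1 = Complex (-1/2) (sqrt 3 / 2)"
proof -
  have "zeta3 1 = cis (2 * pi / 3)" by (simp add: zeta3_def cis_conv_exp algebra_simps)
  then show ?thesis by (simp add: complex_eq_iff cos_120 sin_120)
qed

lemma zeta3_1_square: "zeta3 1 ^ 2 = Complex (-1/2) (- sqrt 3 / 2)"
  unfolding zeta3_1_eq by (simp add: complex_eq_iff power2_eq_square)

lemma zeta3_1_cube: "zeta3 1 ^ 3 = 1"
  unfolding zeta3_1_eq by (simp add: complex_eq_iff power3_eq_cube power2_eq_square)

lemma zeta3_1_sum: "1 + zeta3 1 + zeta3 1 ^ 2 = 0"
  unfolding zeta3_1_eq by (simp add: complex_eq_iff power2_eq_square)

lemma norm_zeta3: "norm (zeta3 m) = 1"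
  by (simp add: zeta3_def)

lemma cube_root_of_unity_inverse:
  fixes w :: "'a :: field"
  assumes "w ^ 3 = 1"
  shows "inverse w = w ^ 2" and "inverse (w ^ 2) = w"
proof -
  show "inverse w = w ^ 2"
    by (rule inverse_unique) (use assms in \<open>simp add: power3_eq_cube power2_eq_square mult.assoc\<close>)
  show "inverse (w ^ 2) = w"
    by (rule inverse_unique) (use assms in \<open>simp add: power3_eq_cube power2_eq_square\<close>)
qed

lemma hyp3_expand:
  "hyp3 k z = (exp z + zeta3 1 ^ (2 * k) * exp (zeta3 1 * z) + zeta3 1 ^ k * exp (zeta3 1 ^ 2 * z)) / 3"
proof -
  have sum3: "(\<Sum>m<3. f m) = f 0 + f 1 + f 2" for f :: "nat \<Rightarrow> complex"
    by (simp add: eval_nat_numeral)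
  show ?thesis
    unfolding hyp3_def sum3 zeta3_eq_power[of 2] cube_root_of_unity_inverse[OF zeta3_1_cube]
    by (simp add: zeta3_def mult.commute flip: power_mult)
qed

lemma hyp3_mult_zeta3_1: "hyp3 k (zeta3 1 * z) = zeta3 1 ^ k * hyp3 k z"
proof -
  define \<omega> where "\<omega> = zeta3 1"
  have "\<omega> ^ 3 = 1" unfolding \<omega>_def by (rule zeta3_1_cube)
  have "\<omega> ^ 2 * (\<omega> * z) = z"
    using \<open>\<omega> ^ 3 = 1\<close> by (simp add: power3_eq_cube power2_eq_square mult.assoc)
  have "\<omega> ^ (2 * k) * \<omega> ^ k = (\<omega> ^ 3) ^ k"
    by (simp add: power_mult[symmetric] power_add[symmetric])
  then have "\<omega> ^ (2 * k) * \<omega> ^ k = 1" using \<open>\<omega> ^ 3 = 1\<close> by simp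
  have "hyp3 k (\<omega> * z) = (exp (\<omega> * z) + \<omega> ^ (2 * k) * exp (\<omega> ^ 2 * z) + \<omega> ^ k * exp z) / 3"
    unfolding hyp3_expand \<omega>_def[symmetric] \<open>\<omega> ^ 2 * (\<omega> * z) = z\<close>
    by (simp add: power2_eq_square mult.assoc)
  also have "\<dots> = (\<omega> ^ k * exp z + (\<omega> ^ (2 * k) * \<omega> ^ k) * exp (\<omega> * z)
      + (\<omega> ^ k * \<omega> ^ k) * exp (\<omega> ^ 2 * z)) / 3"
    using \<open>\<omega> ^ (2 * k) * \<omega> ^ k = 1\<close> by (simp add: mult_2 power_add)
  also have "\<dots> = \<omega> ^ k * hyp3 k z"
    unfolding hyp3_expand \<omega>_def[symmetric] by (simp add: algebra_simps)
  finally show ?thesis unfolding \<omega>_def .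
qed

lemma hyp3_mult_zeta3: "hyp3 k (zeta3 j * z) = zeta3 j ^ k * hyp3 k z"
proof (induction j arbitrary: z)
  case 0
  then show ?case by (simp add: zeta3_def)
next
  case (Suc j)
  have step: "zeta3 (Suc j) = zeta3 1 * zeta3 j"
    using zeta3_eq_power[of "Suc j"] zeta3_eq_power[of j] by simp
  have "hyp3 k (zeta3 (Suc j) * z) = hyp3 k (zeta3 1 * (zeta3 j * z))"
    by (simp only: step mult.assoc)
  also have "\<dots> = zeta3 1 ^ k * (zeta3 j ^ k * hyp3 k z)"
    by (simp only: hyp3_mult_zeta3_1 Suc.IH)
  also have "\<dots> = zeta3 (Suc j) ^ k * hyp3 k z"
    by (simp only: step power_mult_distrib mult.assoc)
  finally show ?case .
qed

lemma cube_eq_of_sum_zero_prod_one: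
  fixes a b c :: "'a :: field"
  assumes "a + b + c = 0" and "a * b * c = 1"
  shows "c ^ 3 = a / b + b / a + 2"
proof -
  have "a \<noteq> 0" "b \<noteq> 0" using assms(2) by auto
  have "c = - (a + b)" using assms(1) by (simp add: eq_neg_iff_add_eq_0 algebra_simps)
  then have "c ^ 2 = (a + b) ^ 2" by (simp only: power2_minus)
  have "c ^ 3 * (a * b) = c ^ 2 * (a * b * c)"
    by (simp add: power2_eq_square power3_eq_cube algebra_simps)
  also have "\<dots> = (a + b) ^ 2" using \<open>c ^ 2 = (a + b) ^ 2\<close> assms(2) by simp
  finally show ?thesis
    using \<open>a \<noteq> 0\<close> \<open>b \<noteq> 0\<close> by (simp add: field_simps power2_eq_square)
qed

lemma quartic_bound_of_exp_lower:
  fixes P E :: real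
  assumes "0 < P" and "1 + P + P^2/2 \<le> E"
  shows "4 - 4*E + 6*P^2*E < (E^2 - 1)^2"
proof -
  define e where "e = E - 1"
  have "P \<le> e" using assms zero_le_power2[of P] unfolding e_def by linarith
  have "P^2 * (e + 2)^2 \<le> e^2 * (e + 2)^2"
    using \<open>P \<le> e\<close> \<open>0 < P\<close> by (intro mult_right_mono power_mono) auto
  moreover have "0 < P^2 * (e - 1)^2 + P * (4 - P)"
  proof (cases "2 \<le> e")
    case True
    then have "1 \<le> (e - 1)^2" using power_mono[of 1 "e - 1" 2] by simp
    then have "P^2 * 1 \<le> P^2 * (e - 1)^2" by (rule mult_left_mono) simp
    moreover have "P * (4 - P) = 4 * P - P^2" by (simp add: power2_eq_square algebra_simps)
    ultimately show ?thesis using \<open>0 < P\<close> by linarith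
  next
    case False
    then show ?thesis using \<open>P \<le> e\<close> \<open>0 < P\<close>
      by (intro add_nonneg_pos) auto
  qed
  moreover have "4 * P + 2 * P^2 \<le> 4 * e" using assms by (simp add: e_def)
  ultimately show ?thesis
    by (simp add: e_def power2_eq_square algebra_simps)
qed

lemma self_le_sinh:
  fixes x :: real
  assumes "0 \<le> x"
  shows "x \<le> sinh x"
proof -
  have "sinh 0 - 0 \<le> sinh x - x"
  proof (rule DERIV_nonneg_imp_nondecreasing[OF assms])
    fix u :: real
    have "((\<lambda>x. sinh x - x) has_real_derivative cosh u - 1) (at u)"
      by (auto intro!: derivative_eq_intros)
    then show "\<exists>y. ((\<lambda>x. sinh x - x) has_real_derivative y) (at u) \<and> 0 \<le> y"
      using cosh_real_ge_1[of u] by force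
  qed
  then show ?thesis by simp
qed

lemma one_minus_half_square_le_cos:
  fixes x :: real
  shows "1 - x^2 / 2 \<le> cos x"
proof -
  have "cos x = 1 - 2 * sin (x/2) ^ 2"
    using cos_double_sin[of "x/2"] by simp
  moreover have "\<bar>sin (x/2)\<bar>^2 \<le> \<bar>x/2\<bar>^2"
    by (intro power_mono abs_sin_x_le_abs_x) simp
  ultimately show ?thesis by (simp add: power_divide)
qed

lemma convex_quadratic_less_on_interval:
  fixes a b g K R R0 :: real
  assumes "0 \<le> a" and "0 \<le> R" "R \<le> R0"
    and "g < K" and "a * R0^2 + b * R0 + g < K"
  shows "a * R^2 + b * R + g < K"
proof (cases "R = R0")
  case False
  then have "R < R0" using assms by linarith
  have "R0 * (a * R^2 + b * R + g) = (R0 - R) * g + R * (a * R0^2 + b * R0 + g) + a * R * R0 * (R - R0)"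
    by (simp add: power2_eq_square algebra_simps)
  also have "\<dots> \<le> (R0 - R) * g + R * (a * R0^2 + b * R0 + g)"
    using assms by (simp add: mult_nonneg_nonpos)
  also have "\<dots> < (R0 - R) * K + R * K"
  proof (rule add_less_le_mono)
    show "(R0 - R) * g < (R0 - R) * K" using assms \<open>R < R0\<close> by simp
    show "R * (a * R0^2 + b * R0 + g) \<le> R * K" using assms by (simp add: mult_left_mono)
  qed
  finally have "R0 * (a * R^2 + b * R + g) < R0 * K" by (simp add: algebra_simps)
  then show ?thesis using \<open>R < R0\<close> assms by (simp add: mult_less_cancel_left_pos)
qed (use assms in simp)

lemma polar_point_inside_ellipse_endpoint:
  fixes P :: real
  assumes "0 < P"
  defines "S \<equiv> exp P - exp (-P)" and "C \<equiv> exp P + exp (-P)"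
  shows "(exp (-P) * cos (sqrt 3 * P) - 2)^2 * S^2 + (exp (-P) * sin (sqrt 3 * P))^2 * C^2 < C^2 * S^2"
proof -
  define E where "E = exp P"
  define c where "c = cos (sqrt 3 * P)"
  define q where "q = sin (sqrt 3 * P)"
  have "0 < E" by (simp add: E_def)
  have E_inv: "exp (-P) = inverse E" by (simp add: E_def exp_minus)
  have S: "S = E - inverse E" and C: "C = E + inverse E" by (simp_all add: S_def C_def E_inv E_def)
  have ES: "E * S = E^2 - 1" using \<open>0 < E\<close> by (simp add: S power2_eq_square algebra_simps)
  have CS: "C^2 = S^2 + 4" using \<open>0 < E\<close> by (simp add: S C power2_eq_square field_simps)
  have "2 * P \<le> S" using self_le_sinh[of P] \<open>0 < P\<close> by (simp add: S_def sinh_field_def)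
  then have "4 * P^2 \<le> S^2" using \<open>0 < P\<close> power_mono[of "2 * P" S 2] by (simp add: power_mult_distrib)
  have q_bound: "4 * q^2 \<le> 3 * S^2"
  proof -
    have "\<bar>q\<bar>^2 \<le> \<bar>sqrt 3 * P\<bar>^2" unfolding q_def by (intro power_mono abs_sin_x_le_abs_x) simp
    then have "q^2 \<le> 3 * P^2" by (simp add: power_mult_distrib)
    then show ?thesis using \<open>4 * P^2 \<le> S^2\<close> by linarith
  qed
  have c_bound: "1 - 3 * P^2 / 2 \<le> c"
    using one_minus_half_square_le_cos[of "sqrt 3 * P"] by (simp add: c_def power_mult_distrib)
  have "E^2 * ((inverse E * c - 2)^2 * S^2 + (inverse E * q)^2 * C^2)
      = S^2 * (c^2 + q^2) - 4 * c * E * S^2 + 4 * q^2 + 4 * E^2 * S^2"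
    using \<open>0 < E\<close> CS by (simp add: power2_eq_square field_simps)
  also have "\<dots> = S^2 - 4 * c * E * S^2 + 4 * q^2 + 4 * E^2 * S^2"
    by (simp add: c_def q_def)
  also have "\<dots> \<le> S^2 * (4 - 4 * E + 6 * P^2 * E) + 4 * E^2 * S^2"
  proof -
    have "(1 - 3 * P^2 / 2) * (E * S^2) \<le> c * (E * S^2)"
      using c_bound \<open>0 < E\<close> by (intro mult_right_mono) auto
    then show ?thesis using q_bound by (simp add: algebra_simps)
  qed
  also have "\<dots> < S^2 * (E^2 - 1)^2 + 4 * E^2 * S^2"
  proof -
    have "1 + P + P^2/2 \<le> E" using exp_lower_Taylor_quadratic \<open>0 < P\<close> by (simp add: E_def)
    moreover have "0 < S" using \<open>2 * P \<le> S\<close> \<open>0 < P\<close> by linarith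
    ultimately show ?thesis
      using quartic_bound_of_exp_lower[OF \<open>0 < P\<close>] by simp
  qed
  also have "\<dots> = E^2 * (C^2 * S^2)"
    unfolding ES[symmetric] CS by (simp add: power2_eq_square algebra_simps)
  finally show ?thesis
    using \<open>0 < E\<close> by (simp add: E_inv c_def q_def mult_less_cancel_left)
qed

lemma polar_point_inside_ellipse:
  fixes p R :: real
  assumes "0 < p" and "0 \<le> R" and "R \<le> exp (-p)"
  defines "S \<equiv> exp p - exp (-p)" and "C \<equiv> exp p + exp (-p)"
  shows "(R * cos (sqrt 3 * p) - 2)^2 * S^2 + (R * sin (sqrt 3 * p))^2 * C^2 < C^2 * S^2"
proof -
  define c where "c = cos (sqrt 3 * p)"
  define q where "q = sin (sqrt 3 * p)"
  have "0 < S" using \<open>0 < p\<close> by (simp add: S_def)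
  have CS: "C^2 = S^2 + 4"
    by (simp add: S_def C_def power2_eq_square algebra_simps flip: exp_add)
  \<comment> \<open>The left-hand side is a convex quadratic in \<open>R\<close>, so the endpoints \<open>R = 0\<close> and \<open>R = exp (-p)\<close> suffice.\<close>
  have "(c^2 * S^2 + q^2 * C^2) * R^2 + (- 4 * c * S^2) * R + 4 * S^2 < C^2 * S^2"
  proof (rule convex_quadratic_less_on_interval)
    show "4 * S^2 < C^2 * S^2" using CS \<open>0 < S\<close> by (simp add: algebra_simps)
    show "(c^2 * S^2 + q^2 * C^2) * (exp (-p))^2 + (- 4 * c * S^2) * exp (-p) + 4 * S^2 < C^2 * S^2"
      using polar_point_inside_ellipse_endpoint[OF \<open>0 < p\<close>]
      by (simp add: S_def C_def c_def q_def power2_eq_square algebra_simps)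
  qed (use assms in simp_all)
  moreover have "(c^2 * S^2 + q^2 * C^2) * R^2 + (- 4 * c * S^2) * R + 4 * S^2
      = (R * c - 2)^2 * S^2 + (R * q)^2 * C^2"
    by (simp add: power2_eq_square algebra_simps)
  ultimately show ?thesis by (simp add: c_def q_def)
qed

lemma exp_add_exp_minus_add_two_ne_polar:
  fixes w :: complex and R :: real
  assumes "Re w \<noteq> 0" and "0 \<le> R" and "R \<le> exp (-\<bar>Re w\<bar>)"
  shows "exp w + exp (-w) + 2 \<noteq> R * cis (sqrt 3 * Re w)"
proof -
  have pos_case: "exp w + exp (-w) + 2 \<noteq> R * cis (sqrt 3 * Re w)"
    if "0 < Re w" "R \<le> exp (- Re w)" for w
  proof
    assume eq: "exp w + exp (-w) + 2 = R * cis (sqrt 3 * Re w)"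
    define p where "p = Re w"
    define D where "D = Im w"
    have "(exp p + exp (-p)) * cos D = R * cos (sqrt 3 * p) - 2"
      using arg_cong[OF eq, of Re] by (simp add: p_def D_def Re_exp algebra_simps)
    moreover have "(exp p - exp (-p)) * sin D = R * sin (sqrt 3 * p)"
      using arg_cong[OF eq, of Im] by (simp add: p_def D_def Im_exp algebra_simps)
    ultimately have "(R * cos (sqrt 3 * p) - 2)^2 * (exp p - exp (-p))^2
          + (R * sin (sqrt 3 * p))^2 * (exp p + exp (-p))^2
        = ((exp p + exp (-p)) * cos D)^2 * (exp p - exp (-p))^2
          + ((exp p - exp (-p)) * sin D)^2 * (exp p + exp (-p))^2"
      by simp
    also have "\<dots> = (exp p + exp (-p))^2 * (exp p - exp (-p))^2 * ((cos D)^2 + (sin D)^2)"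
      by algebra
    finally show False
      using polar_point_inside_ellipse[of p R] that \<open>0 \<le> R\<close> by (simp add: p_def)
  qed
  \<comment> \<open>Replacing \<open>w\<close> by \<open>-cnj w\<close> conjugates both sides and flips the sign of \<open>Re w\<close>.\<close>
  show ?thesis
  proof (cases "0 < Re w")
    case False
    then have "exp (- cnj w) + exp (- (- cnj w)) + 2 \<noteq> R * cis (sqrt 3 * Re (- cnj w))"
      using assms by (intro pos_case) auto
    moreover have "exp (- cnj w) + exp (- (- cnj w)) + 2 = cnj (exp w + exp (-w) + 2)"
      by (simp add: exp_cnj)
    moreover have "R * cis (sqrt 3 * Re (- cnj w)) = cnj (R * cis (sqrt 3 * Re w))"
      by (simp add: cis_cnj)
    ultimately show ?thesis by metis
  qed (use assms pos_case in auto)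
qed

lemma hyp3_nonzero_in_sector:
  assumes "Im v \<noteq> 0" and "sqrt 3 * Re v + \<bar>Im v\<bar> \<le> 0"
  shows "hyp3 k v \<noteq> 0"
proof
  assume "hyp3 k v = 0"
  define \<omega> where "\<omega> = zeta3 1"
  define a where "a = \<omega> ^ k * exp (\<omega> ^ 2 * v)"
  define b where "b = \<omega> ^ (2 * k) * exp (\<omega> * v)"
  have "\<omega> ^ 3 = 1" unfolding \<omega>_def by (rule zeta3_1_cube)
  have "norm \<omega> = 1" unfolding \<omega>_def by (rule norm_zeta3)
  have "a + b + exp v = 0"
    using \<open>hyp3 k v = 0\<close> unfolding hyp3_expand \<omega>_def[symmetric] a_def b_def by (simp add: algebra_simps)
  moreover have "a * b * exp v = 1"
  proof -
    have "a * b * exp v = (\<omega> ^ k * \<omega> ^ (2 * k)) * (exp (\<omega> ^ 2 * v) * exp (\<omega> * v) * exp v)"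
      unfolding a_def b_def by (simp only: mult_ac)
    also have "\<dots> = (\<omega> ^ 3) ^ k * exp (v * (1 + \<omega> + \<omega> ^ 2))"
      by (simp add: algebra_simps flip: exp_add power_mult power_add)
    finally have "a * b * exp v = (\<omega> ^ 3) ^ k * exp (v * (1 + \<omega> + \<omega> ^ 2))" .
    moreover have "1 + \<omega> + \<omega> ^ 2 = 0" unfolding \<omega>_def by (rule zeta3_1_sum)
    ultimately show ?thesis using \<open>\<omega> ^ 3 = 1\<close> by simp
  qed
  ultimately have "exp v ^ 3 = a / b + b / a + 2" by (rule cube_eq_of_sum_zero_prod_one)
  moreover have "exp (3 * v) = exp v ^ 3" using exp_of_nat_mult[of 3 v] by simp
  ultimately have cube: "exp (3 * v) = a / b + b / a + 2" by simp
  have "a \<noteq> 0" "b \<noteq> 0" using \<open>a * b * exp v = 1\<close> by auto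
  define w where "w = Ln (a / b)"
  have exp_w: "exp w = a / b" and exp_minus_w: "exp (- w) = b / a"
    using \<open>a \<noteq> 0\<close> \<open>b \<noteq> 0\<close> by (simp_all add: w_def exp_minus)
  have "Re (\<omega> ^ 2 * v) = Re (\<omega> * v) + sqrt 3 * Im v"
    unfolding \<omega>_def zeta3_1_square unfolding zeta3_1_eq by (simp add: algebra_simps)
  then have "norm a = norm b * exp (sqrt 3 * Im v)"
    using \<open>norm \<omega> = 1\<close> by (simp add: a_def b_def norm_mult norm_power exp_add)
  then have Re_w: "Re w = sqrt 3 * Im v"
    using \<open>a \<noteq> 0\<close> \<open>b \<noteq> 0\<close> by (simp add: w_def norm_divide)
  have "exp (3 * v) = exp (3 * Re v) * cis (sqrt 3 * Re w)"
    by (simp add: exp_eq_polar Re_w mult.assoc[symmetric])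
  moreover have "exp (3 * Re v) \<le> exp (- \<bar>Re w\<bar>)"
    using mult_left_mono[OF assms(2), of "sqrt 3"] by (simp add: Re_w abs_mult algebra_simps)
  moreover have "Re w \<noteq> 0" using assms(1) Re_w by simp
  ultimately show False
    using exp_add_exp_minus_add_two_ne_polar[of w "exp (3 * Re v)"] cube exp_w exp_minus_w by simp
qed

lemma exists_zeta3_rotation_into_sector:
  assumes "z \<notin> (\<Union>\<nu>\<in>{0,1,2}. neg_ray \<nu>)"
  obtains j where "Im (zeta3 j * z) \<noteq> 0" and "sqrt 3 * Re (zeta3 j * z) + \<bar>Im (zeta3 j * z)\<bar> \<le> 0"
proof -
  obtain x y where z: "z = Complex x y" by (rule complex.exhaust)
  define X where "X = sqrt 3 * x"
  have zeta3_0: "zeta3 0 = 1" by (simp add: zeta3_def)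
  have zeta3_2: "zeta3 2 = Complex (-1/2) (- sqrt 3 / 2)"
    unfolding zeta3_eq_power[of 2] by (rule zeta3_1_square)
  have sgn_X: "0 \<le> X \<longleftrightarrow> 0 \<le> x" "X \<le> 0 \<longleftrightarrow> x \<le> 0"
    by (simp_all add: X_def zero_le_mult_iff mult_le_0_iff)
  have "\<not> (y = 0 \<and> X \<le> 0)"
  proof
    assume "y = 0 \<and> X \<le> 0"
    then have "z \<in> neg_ray 0"
      using sgn_X by (auto simp: neg_ray_def zeta3_0 z complex_eq_iff intro!: exI[of _ x])
    then show False using assms by auto
  qed
  moreover have "\<not> (y = - X \<and> 0 \<le> X)"
  proof
    assume "y = - X \<and> 0 \<le> X"
    then have "z = complex_of_real (-2 * x) * zeta3 1"
      unfolding zeta3_1_eq by (simp add: z complex_eq_iff X_def)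
    then have "z \<in> neg_ray 1"
      using \<open>y = - X \<and> 0 \<le> X\<close> sgn_X unfolding neg_ray_def by (auto intro!: exI[of _ "-2 * x"])
    then show False using assms by auto
  qed
  moreover have "\<not> (y = X \<and> 0 \<le> X)"
  proof
    assume "y = X \<and> 0 \<le> X"
    then have "z = complex_of_real (-2 * x) * zeta3 2"
      unfolding zeta3_2 by (simp add: z complex_eq_iff X_def)
    then have "z \<in> neg_ray 2"
      using \<open>y = X \<and> 0 \<le> X\<close> sgn_X unfolding neg_ray_def by (auto intro!: exI[of _ "-2 * x"])
    then show False using assms by auto
  qed
  \<comment> \<open>The three closed sectors of opening \<open>2 * pi / 3\<close> around the rays cover the plane.\<close>
  ultimately consider
      "y \<noteq> 0" "X + \<bar>y\<bar> \<le> 0"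
    | "X/2 - y/2 \<noteq> 0" "- X/2 - 3*y/2 + \<bar>X/2 - y/2\<bar> \<le> 0"
    | "- (X/2 + y/2) \<noteq> 0" "- X/2 + 3*y/2 + \<bar>- (X/2 + y/2)\<bar> \<le> 0"
    by arith
  then show thesis
  proof cases
    case 1
    then show thesis by (intro that[of 0]) (simp_all add: zeta3_0 z X_def)
  next
    case 2
    have "sqrt 3 * Re (zeta3 1 * z) = - X/2 - 3*y/2" "Im (zeta3 1 * z) = X/2 - y/2"
      unfolding zeta3_1_eq by (simp_all add: z X_def algebra_simps mult.assoc[symmetric])
    then show thesis using 2 by (intro that[of 1]) simp_all
  next
    case 3
    have "sqrt 3 * Re (zeta3 2 * z) = - X/2 + 3*y/2" "Im (zeta3 2 * z) = - (X/2 + y/2)"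
      unfolding zeta3_2 by (simp_all add: z X_def algebra_simps mult.assoc[symmetric])
    then show thesis using 3 by (intro that[of 2]) simp_all
  qed
qed

theorem proposition5p1:
  fixes k :: nat and z :: complex
  assumes "k \<le> 2"
    and "z \<notin> (\<Union>\<nu>\<in>{0,1,2}. neg_ray \<nu>)"
  shows "hyp3 k z \<noteq> 0"
proof -
  obtain j where "Im (zeta3 j * z) \<noteq> 0" and "sqrt 3 * Re (zeta3 j * z) + \<bar>Im (zeta3 j * z)\<bar> \<le> 0"
    using exists_zeta3_rotation_into_sector[OF assms(2)] .
  then have "zeta3 j ^ k * hyp3 k z \<noteq> 0"
    using hyp3_nonzero_in_sector by (simp flip: hyp3_mult_zeta3)
  then show ?thesis by simp
qed

end
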